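(* Let $X$ be a normal Hausdorff topological space, $\Phi$ a local semiflow on $X$, and $\mathscr{A}$ an attractor of $\Phi$. Suppose $\mathscr{A}$ has an admissible neighborhood $N_1$. Then any attractor $A$ of $\Phi$ in $\mathscr{A}$ (i.e. any attractor of the restricted global semiflow $\Phi|_{\mathscr{A}}$ on $\mathscr{A}$) is also an attractor of $\Phi$ in $X$.
   Context: Setting: $X$ is a normal Hausdorff topological space and $\Phi$ is a local semiflow on $X$ (a continuous map from an open set $\mathcal{D}_\Phi\subset\mathbb{R}^+\times X$ to $X$, with escape times $T_x\in(0,\infty]$, $\Phi(0)x=x$, and $\Phi(t+s)x=\Phi(t)\Phi(s)x$). A set $U$ is a neighborhood of $A$ if $\overline{A}\subset\operatorname{int}U$. A set $M$ attracts $B$ if $T_x=\infty$ for all $x\in B$ and for every neighborhood $V$ of $M$ there is $t_0>0$ with $\Phi(t)B\subset V$ for all $t>t_0$. A set is sequentially compact (s-compact) if every sequence in it has a subsequence converging to a point of the set. An attractor of $\Phi$ is a nonempty s-compact invariant set $\mathscr{A}$ for which there is a neighborhood $N$ of $\mathscr{A}$ such that $\mathscr{A}$ attracts $N$ and $\mathscr{A}$ is the maximal s-compact invariant set in $N$. Since $\mathscr{A}$ is invariant, the restriction $\Phi|_{\mathscr{A}}$ is a global semiflow on $\mathscr{A}$; a set $A\subset\mathscr{A}$ is called an attractor of $\Phi$ in $\mathscr{A}$ if it is an attractor of $\Phi|_{\mathscr{A}}$ (with $\mathscr{A}$ carrying the subspace topology). A set $M$ is admissible if for any sequences $x_n\in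 M$ and $t_n\to\infty$ with $\Phi([0,t_n])x_n\subset M$ for all $n$, the sequence $\Phi(t_n)x_n$ has a convergent subsequence. *)

theory Defs
  imports "HOL-Analysis.Analysis" "HOL-Library.Extended_Real"
begin

text \<open>A local semiflow on the topological space X, given by the map Phi (written
  Phi t x for Phi(t)x) and escape times T x in (0, infinity]. Its domain is
  D = {(t,x). x in X, 0 <= t < T x}.\<close>

definition sf_domain :: "'a topology \<Rightarrow> ('a \<Rightarrow> ereal) \<Rightarrow> (real \<times> 'a) set" where
  "sf_domain X T = {(t, x). x \<in> topspace X \<and> 0 \<le> t \<and> ereal t < T x}"

definition local_semiflow ::
  "'a topology \<Rightarrow> ('a \<Rightarrow> ereal) \<Rightarrow> (real \<Rightarrow> 'a \<Rightarrow> 'a) \<Rightarrow> bool" where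
  "local_semiflow X T Phi \<longleftrightarrow>
     (\<forall>x\<in>topspace X. 0 < T x) \<and>
     openin (prod_topology (top_of_set {0..}) X) (sf_domain X T) \<and>
     continuous_map (subtopology (prod_topology euclideanreal X) (sf_domain X T)) X
        (\<lambda>(t, x). Phi t x) \<and>
     (\<forall>x\<in>topspace X. Phi 0 x = x) \<and>
     (\<forall>x\<in>topspace X. \<forall>s t. 0 \<le> s \<and> 0 \<le> t \<and> ereal (t + s) < T x \<longrightarrow>
         ereal t < T (Phi s x) \<and> Phi (t + s) x = Phi t (Phi s x))"

definition sf_nbhd :: "'a topology \<Rightarrow> 'a set \<Rightarrow> 'a set \<Rightarrow> bool" where
  "sf_nbhd X A U \<longleftrightarrow> U \<subseteq> topspace X \<and> X closure_of A \<subseteq> X interior_of U"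

definition sf_scompact :: "'a topology \<Rightarrow> 'a set \<Rightarrow> bool" where
  "sf_scompact X M \<longleftrightarrow> M \<subseteq> topspace X \<and>
     (\<forall>x :: nat \<Rightarrow> 'a. (\<forall>n. x n \<in> M) \<longrightarrow>
        (\<exists>r y. strict_mono r \<and> y \<in> M \<and> limitin X (x \<circ> r) y sequentially))"

definition sf_invariant ::
  "'a topology \<Rightarrow> ('a \<Rightarrow> ereal) \<Rightarrow> (real \<Rightarrow> 'a \<Rightarrow> 'a) \<Rightarrow> 'a set \<Rightarrow> bool" where
  "sf_invariant X T Phi M \<longleftrightarrow> M \<subseteq> topspace X \<and> (\<forall>x\<in>M. T x = \<infinity>) \<and>
     (\<forall>t\<ge>0. Phi t ` M = M)"

definition sf_attracts ::
  "'a topology \<Rightarrow> ('a \<Rightarrow> ereal) \<Rightarrow> (real \<Rightarrow> 'a \<Rightarrow> 'a) \<Rightarrow> 'a set \<Rightarrow> 'a set \<Rightarrow> bool" where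
  "sf_attracts X T Phi M B \<longleftrightarrow> (\<forall>x\<in>B. T x = \<infinity>) \<and>
     (\<forall>V. sf_nbhd X M V \<longrightarrow> (\<exists>t0>0. \<forall>t>t0. Phi t ` B \<subseteq> V))"

definition sf_attractor ::
  "'a topology \<Rightarrow> ('a \<Rightarrow> ereal) \<Rightarrow> (real \<Rightarrow> 'a \<Rightarrow> 'a) \<Rightarrow> 'a set \<Rightarrow> bool" where
  "sf_attractor X T Phi A \<longleftrightarrow> A \<noteq> {} \<and> sf_scompact X A \<and> sf_invariant X T Phi A \<and>
     (\<exists>N. sf_nbhd X A N \<and> sf_attracts X T Phi A N \<and>
        (\<forall>M. sf_scompact X M \<and> sf_invariant X T Phi M \<and> M \<subseteq> N \<longrightarrow> M \<subseteq> A))"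

definition sf_admissible ::
  "'a topology \<Rightarrow> ('a \<Rightarrow> ereal) \<Rightarrow> (real \<Rightarrow> 'a \<Rightarrow> 'a) \<Rightarrow> 'a set \<Rightarrow> bool" where
  "sf_admissible X T Phi M \<longleftrightarrow>
     (\<forall>(x :: nat \<Rightarrow> 'a) (t :: nat \<Rightarrow> real).
        (\<forall>n. x n \<in> M) \<and> filterlim t at_top sequentially \<and>
        (\<forall>n. \<forall>s\<in>{0..t n}. ereal s < T (x n) \<and> Phi s (x n) \<in> M) \<longrightarrow>
        (\<exists>r y. strict_mono r \<and> y \<in> topspace X \<and>
           limitin X (\<lambda>n. Phi (t (r n)) (x (r n))) y sequentially))"

end

theory Submission
  imports Defs "HOL-Library.Diagonal_Subsequence"
begin

text \<open>Take a closed neighbourhood \<open>K\<close> of \<open>AA\<close> inside the interiors of both the neighbourhood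
  \<open>N0\<close> attracted by \<open>AA\<close> and the admissible \<open>N1\<close>. Admissibility turns ever longer orbit
  segments in \<open>K\<close> into limiting complete orbits in \<open>K\<close>, and these lie in \<open>AA\<close> by its maximality.
  Inside \<open>AA\<close>, the complete orbits that never meet the relative interior of the neighbourhood
  \<open>NA\<close> of \<open>A\<close> form a set \<open>R\<close> whose closure misses that of \<open>A\<close>, so by normality \<open>A\<close> has an open
  neighbourhood \<open>W\<close> whose closure misses \<open>R\<close>. A complete orbit in \<open>AA\<close> whose past stays in the
  closure of \<open>W\<close> therefore entered \<open>NA\<close> long ago, so by the attraction of \<open>NA\<close> its present
  point lies in any given neighbourhood of \<open>A\<close>. Hence
  there is a time \<open>S\<close> such that orbits from \<open>N0\<close> which stay in \<open>W\<close> up to time \<open>S\<close> stay in \<open>W\<close>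
  forever; the points of the interior of \<open>N0\<close> with this property form an open neighbourhood of
  \<open>A\<close> which \<open>A\<close> attracts and in which it is the maximal s-compact invariant set.\<close>

lemma eventually_strict_mono_ge:
  assumes "strict_mono r"
  shows "eventually (\<lambda>i. c \<le> real (r i)) sequentially"
proof -
  have "filterlim (\<lambda>i. real (r i)) at_top sequentially"
    using filterlim_compose[OF filterlim_real_sequentially filterlim_subseq[OF assms]]
    by (simp add: o_def)
  then show ?thesis unfolding filterlim_at_top by blast
qed

locale hausdorff_local_semiflow =
  fixes X :: "'a topology" and T :: "'a \<Rightarrow> ereal" and Phi :: "real \<Rightarrow> 'a \<Rightarrow> 'a"
  assumes Hausdorff: "Hausdorff_space X" and local_semiflow: "local_semiflow X T Phi"
begin

lemma continuous_map_flow: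
  "continuous_map (subtopology (prod_topology euclideanreal X) (sf_domain X T)) X
     (\<lambda>z. Phi (fst z) (snd z))"
  using local_semiflow unfolding local_semiflow_def by (simp add: case_prod_beta')

lemma flow_0: "x \<in> topspace X \<Longrightarrow> Phi 0 x = x"
  using local_semiflow unfolding local_semiflow_def by blast

lemma flow_in_topspace:
  assumes "x \<in> topspace X" "T x = \<infinity>" "0 \<le> s"
  shows "Phi s x \<in> topspace X"
proof -
  have "(s, x) \<in> topspace (subtopology (prod_topology euclideanreal X) (sf_domain X T))"
    using assms by (simp add: sf_domain_def)
  then show ?thesis
    using continuous_map_flow
    by (metis (no_types, lifting) continuous_map_def fst_conv snd_conv Pi_iff)
qed

lemma flow_add:
  assumes "x \<in> topspace X" "T x = \<infinity>" "0 \<le> a" "0 \<le> b"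
  shows "Phi (a + b) x = Phi a (Phi b x)"
  using local_semiflow assms unfolding local_semiflow_def by auto

lemma limitin_flow:
  assumes y: "limitin X y l F" and s: "(s \<longlongrightarrow> s0) F" and "0 \<le> s0" "T l = \<infinity>"
    and ev: "eventually (\<lambda>n. 0 \<le> s n \<and> T (y n) = \<infinity> \<and> y n \<in> topspace X) F"
  shows "limitin X (\<lambda>n. Phi (s n) (y n)) (Phi s0 l) F"
proof -
  have "l \<in> topspace X" using y limitin_topspace by metis
  then have "(s0, l) \<in> sf_domain X T" using assms by (simp add: sf_domain_def)
  moreover have "eventually (\<lambda>n. (s n, y n) \<in> sf_domain X T) F"
    using ev by (rule eventually_mono) (simp add: sf_domain_def)
  moreover have "limitin (prod_topology euclideanreal X) (\<lambda>n. (s n, y n)) (s0, l) F"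
    using y s by (simp add: limitin_pairwise o_def)
  ultimately have "limitin (subtopology (prod_topology euclideanreal X) (sf_domain X T))
      (\<lambda>n. (s n, y n)) (s0, l) F"
    by (simp add: limitin_subtopology)
  from continuous_map_limit[OF continuous_map_flow this] show ?thesis by (simp add: o_def)
qed

lemma continuous_map_flow_time:
  assumes "\<forall>x\<in>S. T x = \<infinity>" "0 \<le> s"
  shows "continuous_map (subtopology X S) X (Phi s)"
proof -
  have "continuous_map (subtopology X S)
      (subtopology (prod_topology euclideanreal X) (sf_domain X T)) (\<lambda>x. (s, x))"
  proof (rule continuous_map_into_subtopology)
    show "continuous_map (subtopology X S) (prod_topology euclideanreal X) (\<lambda>x. (s, x))"
      by (simp add: continuous_map_paired continuous_map_from_subtopology)
    show "(\<lambda>x. (s, x)) \<in> topspace (subtopology X S) \<rightarrow> sf_domain X T"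
      using assms by (auto simp: sf_domain_def)
  qed
  from continuous_map_compose[OF this continuous_map_flow] show ?thesis by (simp add: o_def)
qed

lemma continuous_map_orbit:
  assumes "x \<in> topspace X" "T x = \<infinity>"
  shows "continuous_map (top_of_set {0..}) X (\<lambda>s. Phi s x)"
proof -
  have "continuous_map (top_of_set {0..})
      (subtopology (prod_topology euclideanreal X) (sf_domain X T)) (\<lambda>s. (s, x))"
  proof (rule continuous_map_into_subtopology)
    show "continuous_map (top_of_set {0..}) (prod_topology euclideanreal X) (\<lambda>s. (s, x))"
      using assms(1) by (simp add: continuous_map_paired continuous_map_from_subtopology)
    show "(\<lambda>s. (s, x)) \<in> topspace (top_of_set {0::real..}) \<rightarrow> sf_domain X T"
      using assms by (auto simp: sf_domain_def)
  qed
  from continuous_map_compose[OF this continuous_map_flow] show ?thesis by (simp add: o_def)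
qed

lemma flow_image_closure_subset:
  assumes "S \<subseteq> topspace X" "\<forall>x\<in>X closure_of S. T x = \<infinity>"
    and "\<And>s. 0 \<le> s \<Longrightarrow> Phi s ` S \<subseteq> S" and "0 \<le> s"
  shows "Phi s ` (X closure_of S) \<subseteq> X closure_of S"
proof -
  have "(subtopology X (X closure_of S)) closure_of S = X closure_of S"
    using closure_of_subtopology[of X "X closure_of S" S] closure_of_subset[OF assms(1)]
    by (simp add: Int_absorb1)
  then have "Phi s ` (X closure_of S) \<subseteq> X closure_of (Phi s ` S)"
    using continuous_map_image_closure_subset[OF continuous_map_flow_time[OF assms(2,4)], of S]
    by simp
  also have "\<dots> \<subseteq> X closure_of S" using assms(3,4) closure_of_mono by blast
  finally show ?thesis .
qed

text \<open>The set of exit times is closed because orbits are continuous, so it contains its infimum.\<close>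

lemma first_exit_time:
  assumes x: "x \<in> topspace X" "T x = \<infinity>" and W: "openin X W" and s: "0 \<le> s" "Phi s x \<notin> W"
  obtains e where "0 \<le> e" "Phi e x \<notin> W" "\<And>s. 0 \<le> s \<Longrightarrow> s < e \<Longrightarrow> Phi s x \<in> W"
proof -
  define Z where "Z = {s \<in> topspace (top_of_set {0::real..}). Phi s x \<in> topspace X - W}"
  have "closedin (top_of_set {0..}) Z"
    unfolding Z_def using closedin_continuous_map_preimage[OF continuous_map_orbit[OF x]] W
    by blast
  then have "closed Z" using closedin_closed_trans by blast
  moreover have "s \<in> Z" using s flow_in_topspace[OF x] by (simp add: Z_def)
  moreover have bdd: "bdd_below Z" by (rule bdd_belowI[of _ 0]) (simp add: Z_def)
  ultimately have "Inf Z \<in> Z" using closed_contains_Inf by blast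
  moreover have "Phi s' x \<in> W" if "0 \<le> s'" "s' < Inf Z" for s'
    using cInf_lower[OF _ bdd, of s'] that flow_in_topspace[OF x] by (force simp: Z_def)
  ultimately show ?thesis by (intro that[of "Inf Z"]) (auto simp: Z_def)
qed

text \<open>Tube lemma: \<open>{0..c}\<close> is compact, so the projection onto \<open>X\<close> is a closed map.\<close>

lemma openin_stays_until:
  assumes I: "openin X I" "\<forall>x\<in>I. T x = \<infinity>" and W: "openin X W" and c: "0 \<le> c"
  shows "openin X {x \<in> I. \<forall>s\<in>{0..c}. Phi s x \<in> W}"
proof -
  define Y where "Y = subtopology euclideanreal {0..c}"
  define g where "g = (\<lambda>z::real \<times> 'a. Phi (fst z) (snd z))"
  have tY: "topspace Y = {0..c}" unfolding Y_def by simp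
  have "prod_topology Y (subtopology X I)
      = subtopology (prod_topology euclideanreal X) ({0..c} \<times> I)"
    unfolding Y_def by (simp add: subtopology_Times)
  moreover have "{0..c} \<times> I \<subseteq> sf_domain X T"
    using I openin_subset[OF I(1)] by (auto simp: sf_domain_def)
  ultimately have "continuous_map (prod_topology Y (subtopology X I)) X g"
    unfolding g_def using continuous_map_from_subtopology_mono[OF continuous_map_flow] by metis
  define G where "G = {z \<in> topspace (prod_topology Y (subtopology X I)). g z \<in> W}"
  have "openin (prod_topology Y (subtopology X I)) G"
    unfolding G_def by (rule openin_continuous_map_preimage[OF \<open>continuous_map _ _ g\<close> W])
  moreover have "prod_topology Y (subtopology X I) = subtopology (prod_topology Y X) (topspace Y \<times> I)"
    by (simp add: prod_topology_subtopology(2))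
  moreover have "openin (prod_topology Y X) (topspace Y \<times> I)"
    using I(1) by (simp add: openin_prod_Times_iff)
  ultimately have "openin (prod_topology Y X) G" using openin_trans_full by metis
  then have "closedin (prod_topology Y X) (topspace (prod_topology Y X) - G)" by blast
  then have "closedin X (snd ` (topspace (prod_topology Y X) - G))"
    using closed_map_snd[of Y X] unfolding closed_map_def Y_def
    by (simp add: compact_space_subtopology)
  moreover have "{x \<in> I. \<forall>s\<in>{0..c}. Phi s x \<in> W}
      = topspace X - snd ` (topspace (prod_topology Y X) - G)"
  proof (intro equalityI subsetI)
    fix x assume x: "x \<in> {x \<in> I. \<forall>s\<in>{0..c}. Phi s x \<in> W}"
    have "(s, x) \<in> G" if "(s, x) \<in> topspace (prod_topology Y X)" for s
      using that x by (simp add: G_def g_def tY)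
    then show "x \<in> topspace X - snd ` (topspace (prod_topology Y X) - G)"
      using x openin_subset[OF I(1)] by force
  next
    fix x assume x: "x \<in> topspace X - snd ` (topspace (prod_topology Y X) - G)"
    have "(s, x) \<in> G" if "s \<in> {0..c}" for s
    proof (rule ccontr)
      assume "(s, x) \<notin> G"
      then have "(s, x) \<in> topspace (prod_topology Y X) - G" using that x tY by simp
      then show False using x by (metis Diff_iff image_eqI snd_conv)
    qed
    then show "x \<in> {x \<in> I. \<forall>s\<in>{0..c}. Phi s x \<in> W}"
      using c by (auto simp: G_def g_def)
  qed
  ultimately show ?thesis by (simp add: openin_diff)
qed

end

text \<open>Points on a complete orbit in \<open>C\<close>; the backward half of the orbit is recorded only at
  integer times, through a chain \<open>v\<close> with \<open>Phi 1 (v (Suc m)) = v m\<close>.\<close>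

definition invariant_part :: "(real \<Rightarrow> 'a \<Rightarrow> 'a) \<Rightarrow> 'a set \<Rightarrow> 'a set" where
  "invariant_part Phi C = {z. \<exists>v. v 0 = z \<and> (\<forall>m. Phi 1 (v (Suc m)) = v m) \<and>
     (\<forall>m s. 0 \<le> s \<longrightarrow> Phi s (v m) \<in> C)}"

lemma invariant_partE:
  assumes "z \<in> invariant_part Phi C"
  obtains v where "v 0 = z" "\<forall>m. Phi 1 (v (Suc m)) = v m" "\<forall>m s. 0 \<le> s \<longrightarrow> Phi s (v m) \<in> C"
  using assms unfolding invariant_part_def by blast

lemma invariant_partI:
  assumes "\<forall>m. Phi 1 (v (Suc m)) = v m" "\<forall>m s. 0 \<le> s \<longrightarrow> Phi s (v m) \<in> C"
  shows "v m \<in> invariant_part Phi C"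
  unfolding invariant_part_def by (intro CollectI exI[of _ "\<lambda>i. v (m + i)"]) (use assms in auto)

lemma backward_chain_mem:
  fixes Phi :: "real \<Rightarrow> 'a \<Rightarrow> 'a"
  assumes "\<forall>m. Phi 1 (v (Suc m)) = v m" "\<forall>m s. 0 \<le> s \<longrightarrow> Phi s (v m) \<in> C"
  shows "v m \<in> C"
  using assms by (metis zero_le_one)

lemma invariant_part_subset: "invariant_part Phi C \<subseteq> C"
proof
  fix z assume "z \<in> invariant_part Phi C"
  then obtain v where "v 0 = z" "\<forall>m. Phi 1 (v (Suc m)) = v m" "\<forall>m s. 0 \<le> s \<longrightarrow> Phi s (v m) \<in> C"
    by (rule invariant_partE)
  then show "z \<in> C" using backward_chain_mem[of Phi v C 0] by simp
qed

lemma invariant_part_mono: "C \<subseteq> C' \<Longrightarrow> invariant_part Phi C \<subseteq> invariant_part Phi C'"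
  unfolding invariant_part_def by blast

lemma invariant_part_if_limitin:
  assumes "\<forall>m. Phi 1 (v (Suc m)) = v m" "closedin X C"
    and "\<forall>m s. 0 \<le> s \<longrightarrow> limitin X (f m s) (Phi s (v m)) sequentially"
    and "\<forall>m s. 0 \<le> s \<longrightarrow> eventually (\<lambda>i. f m s i \<in> C) sequentially"
  shows "v m \<in> invariant_part Phi C"
proof (rule invariant_partI)
  show "\<forall>m s. 0 \<le> s \<longrightarrow> Phi s (v m) \<in> C"
  proof (intro allI impI)
    fix m and s :: real assume "0 \<le> s"
    then show "Phi s (v m) \<in> C"
      using limitin_closedin[OF _ assms(2)] assms(3,4) trivial_limit_sequentially by blast
  qed
qed (fact assms(1))

locale admissible_region = hausdorff_local_semiflow +
  fixes K N1 :: "'a set"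
  assumes closedin_K: "closedin X K" and K_subset: "K \<subseteq> N1"
    and complete_on_K: "\<forall>x\<in>K. T x = \<infinity>" and admissible: "sf_admissible X T Phi N1"
begin

lemma K_subset_topspace: "K \<subseteq> topspace X"
  using closedin_K closedin_subset by blast

lemma flow_add_K:
  assumes "x \<in> K" "0 \<le> a" "0 \<le> b"
  shows "Phi (a + b) x = Phi a (Phi b x)"
  using flow_add[of x a b] assms complete_on_K K_subset_topspace by auto

lemma flow_backward_chain:
  assumes "\<forall>m. v m \<in> K" "\<forall>m. Phi 1 (v (Suc m)) = v m"
  shows "Phi (real m) (v m) = v 0"
proof (induction m)
  case 0
  show ?case using flow_0 assms(1) K_subset_topspace by auto
next
  case (Suc m)
  have "Phi (real (Suc m)) (v (Suc m)) = Phi (real m) (Phi 1 (v (Suc m)))"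
    using flow_add_K[of "v (Suc m)" "real m" 1] assms(1) by (simp add: add.commute)
  also have "\<dots> = v 0" using assms(2) Suc by simp
  finally show ?case .
qed

lemma admissible_limit_along:
  fixes x :: "nat \<Rightarrow> 'a" and t :: "nat \<Rightarrow> real" and q :: "nat \<Rightarrow> nat" and c :: real
  assumes xK: "\<forall>n. x n \<in> K" and fw: "\<forall>n s. 0 \<le> s \<longrightarrow> Phi s (x n) \<in> K"
    and t: "filterlim t at_top sequentially" and q: "strict_mono q"
  obtains r y where "strict_mono r"
    "limitin X (\<lambda>n. Phi (max 0 (t (q (r n)) - c)) (x (q (r n)))) y sequentially"
proof -
  have "filterlim (\<lambda>n. max 0 (t (q n) - c)) at_top sequentially"
    unfolding filterlim_at_top
  proof
    fix Z :: real
    have "filterlim (t \<circ> q) at_top sequentially"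
      using filterlim_compose[OF t filterlim_subseq[OF q]] by (simp add: o_def)
    then have "eventually (\<lambda>n. Z + c \<le> (t \<circ> q) n) sequentially"
      unfolding filterlim_at_top by blast
    then show "eventually (\<lambda>n. Z \<le> max 0 (t (q n) - c)) sequentially"
      by (rule eventually_mono) auto
  qed
  moreover have "\<forall>n. \<forall>s\<in>{0..max 0 (t (q n) - c)}. ereal s < T (x (q n)) \<and> Phi s (x (q n)) \<in> N1"
    using xK fw complete_on_K K_subset by auto
  moreover have "\<forall>n. (x \<circ> q) n \<in> N1" using xK K_subset by auto
  ultimately have "\<exists>r y. strict_mono r \<and> y \<in> topspace X \<and>
      limitin X (\<lambda>n. Phi (max 0 (t (q (r n)) - c)) (x (q (r n)))) y sequentially"
    using admissible[unfolded sf_admissible_def, rule_format, of "x \<circ> q" "\<lambda>n. max 0 (t (q n) - c)"]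
    by simp
  then show ?thesis using that by blast
qed

text \<open>The key compactness step: a diagonal subsequence makes the orbit segments ending at time
  \<open>t n - m\<close> converge for every \<open>m\<close> at once, and the limits form a complete orbit in \<open>K\<close>.\<close>

lemma limit_backward_chain:
  fixes x :: "nat \<Rightarrow> 'a" and t :: "nat \<Rightarrow> real"
  assumes xK: "\<forall>n. x n \<in> K" and fw: "\<forall>n s. 0 \<le> s \<longrightarrow> Phi s (x n) \<in> K"
    and t: "filterlim t at_top sequentially"
  obtains r v where "strict_mono r" "\<forall>m. v m \<in> K" "\<forall>m. Phi 1 (v (Suc m)) = v m"
    "\<forall>m s. 0 \<le> s \<longrightarrow>
       limitin X (\<lambda>i. Phi (t (r i) - real m + s) (x (r i))) (Phi s (v m)) sequentially"
proof -
  define a where "a m n = Phi (max 0 (t n - real m)) (x n)" for m n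
  have aK: "a m n \<in> K" for m n using fw unfolding a_def by simp
  then have aX: "a m n \<in> topspace X" for m n using K_subset_topspace by blast
  interpret diag: subseqs "\<lambda>m s. \<exists>y. limitin X (a m \<circ> s) y sequentially"
  proof
    fix m and s :: "nat \<Rightarrow> nat" assume "strict_mono s"
    then obtain r y where "strict_mono r"
      "limitin X (\<lambda>n. Phi (max 0 (t (s (r n)) - real m)) (x (s (r n)))) y sequentially"
      using admissible_limit_along[OF xK fw t] by metis
    then show "\<exists>r'. strict_mono r' \<and> (\<exists>y. limitin X (a m \<circ> (s \<circ> r')) y sequentially)"
      unfolding a_def by (auto simp: o_def)
  qed
  define r where "r = diag.diagseq"
  have r: "strict_mono r" unfolding r_def by (rule diag.subseq_diagseq)
  have "\<exists>y. limitin X (\<lambda>i. a m (r i)) y sequentially" for m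
  proof -
    have "\<exists>y. limitin X (a m \<circ> (diag.diagseq \<circ> (+) (Suc m))) y sequentially"
    proof (rule diag.diagseq_holds)
      fix r s n assume "strict_mono (r :: nat \<Rightarrow> nat)" "\<exists>y. limitin X (a n \<circ> s) y sequentially"
      then show "\<exists>y. limitin X (a n \<circ> (s \<circ> r)) y sequentially"
        using limitin_subsequence by (metis o_assoc)
    qed
    then show ?thesis
      using limitin_sequentially_offset_rev[of X "\<lambda>i. a m (r i)" "Suc m"]
      by (auto simp: r_def o_def add.commute)
  qed
  then obtain v where vlim: "\<And>m. limitin X (\<lambda>i. a m (r i)) (v m) sequentially"
    by metis
  have vK: "v m \<in> K" for m
    by (rule limitin_closedin[OF vlim closedin_K]) (auto simp: aK)
  have L: "limitin X (\<lambda>i. Phi (t (r i) - real m + s) (x (r i))) (Phi s (v m)) sequentially"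
    if s: "0 \<le> s" for m s
  proof (rule limitin_transform_eventually)
    show "limitin X (\<lambda>i. Phi s (a m (r i))) (Phi s (v m)) sequentially"
      by (rule limitin_flow[OF vlim]) (use s vK aK aX complete_on_K in \<open>auto intro!: always_eventually\<close>)
    have "eventually (\<lambda>i. real m \<le> t (r i)) sequentially"
      using filterlim_compose[OF t filterlim_subseq[OF r]] unfolding filterlim_at_top
      by (simp add: o_def)
    then show "eventually (\<lambda>i. Phi s (a m (r i)) = Phi (t (r i) - real m + s) (x (r i)))
        sequentially"
      by (rule eventually_mono) (use flow_add_K xK s in \<open>auto simp: a_def add.commute\<close>)
  qed
  have "Phi 1 (v (Suc m)) = v m" for m
  proof -
    have "limitin X (\<lambda>i. Phi (t (r i) - real (Suc m) + 1) (x (r i))) (Phi 1 (v (Suc m))) sequentially"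
      using L[of 1 "Suc m"] by simp
    moreover have "limitin X (\<lambda>i. Phi (t (r i) - real (Suc m) + 1) (x (r i))) (Phi 0 (v m)) sequentially"
      using L[of 0 m] by (simp add: algebra_simps)
    ultimately have "Phi 1 (v (Suc m)) = Phi 0 (v m)"
      using limitin_Hausdorff_unique[OF _ _ trivial_limit_sequentially Hausdorff] by blast
    then show ?thesis using flow_0 vK K_subset_topspace by auto
  qed
  then show ?thesis using that r vK L by blast
qed

lemma flow_invariant_part:
  assumes "C \<subseteq> K" "z \<in> invariant_part Phi C" "0 \<le> t"
  shows "Phi t z \<in> invariant_part Phi C"
proof -
  obtain v where v0: "v 0 = z" and v1: "\<forall>m. Phi 1 (v (Suc m)) = v m"
    and vC: "\<forall>m s. 0 \<le> s \<longrightarrow> Phi s (v m) \<in> C"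
    using assms(2) by (rule invariant_partE)
  have vK: "v m \<in> K" for m using backward_chain_mem[OF v1 vC] assms(1) by blast
  have "Phi 1 (Phi t (v (Suc m))) = Phi t (v m)" for m
    using flow_add_K[of "v (Suc m)" 1 t] flow_add_K[of "v (Suc m)" t 1] vK v1 assms(3)
    by (simp add: add.commute)
  moreover have "Phi s (Phi t (v m)) \<in> C" if "0 \<le> s" for m s
  proof -
    have "Phi (s + t) (v m) \<in> C" using vC that assms(3) by simp
    then show ?thesis using flow_add_K[of "v m" s t] vK that assms(3) by simp
  qed
  ultimately show ?thesis
    using invariant_partI[of Phi "\<lambda>m. Phi t (v m)" C 0] v0 by simp
qed

lemma invariant_part_subset_flow_image:
  assumes "C \<subseteq> K" "z \<in> invariant_part Phi C" "0 \<le> t"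
  shows "z \<in> Phi t ` invariant_part Phi C"
proof -
  obtain v where v0: "v 0 = z" and v1: "\<forall>m. Phi 1 (v (Suc m)) = v m"
    and vC: "\<forall>m s. 0 \<le> s \<longrightarrow> Phi s (v m) \<in> C"
    using assms(2) by (rule invariant_partE)
  have vK: "\<forall>m. v m \<in> K" using backward_chain_mem[OF v1 vC] assms(1) by blast
  define k where "k = nat \<lceil>t\<rceil>"
  have kt: "t \<le> real k" unfolding k_def by linarith
  have "Phi (real k - t) (v k) \<in> invariant_part Phi C"
    using flow_invariant_part[OF assms(1) invariant_partI[OF v1 vC]] kt by simp
  moreover have "Phi t (Phi (real k - t) (v k)) = z"
    using flow_add_K[of "v k" t "real k - t"] flow_backward_chain[OF vK v1, of k] vK
      assms(3) kt v0 by simp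
  ultimately show ?thesis by blast
qed

lemma sf_invariant_invariant_part: "sf_invariant X T Phi (invariant_part Phi K)"
  unfolding sf_invariant_def
proof (intro conjI ballI allI impI)
  show "invariant_part Phi K \<subseteq> topspace X"
    using invariant_part_subset[of Phi K] K_subset_topspace by blast
  show "T x = \<infinity>" if "x \<in> invariant_part Phi K" for x
    using that invariant_part_subset[of Phi K] complete_on_K by blast
  show "Phi t ` invariant_part Phi K = invariant_part Phi K" if "0 \<le> t" for t
    using flow_invariant_part[OF order_refl _ that] invariant_part_subset_flow_image[OF order_refl _ that]
    by blast
qed

lemma sf_scompact_invariant_part: "sf_scompact X (invariant_part Phi K)"
  unfolding sf_scompact_def
proof (intro conjI allI impI)
  show "invariant_part Phi K \<subseteq> topspace X"
    using invariant_part_subset[of Phi K] K_subset_topspace by blast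
  fix z :: "nat \<Rightarrow> 'a" assume "\<forall>n. z n \<in> invariant_part Phi K"
  then have "\<forall>n. \<exists>v. v 0 = z n \<and> (\<forall>m. Phi 1 (v (Suc m)) = v m) \<and>
      (\<forall>m s. 0 \<le> s \<longrightarrow> Phi s (v m) \<in> K)"
    unfolding invariant_part_def by blast
  then obtain V where V0: "\<And>n. V n 0 = z n" and V1: "\<And>n. \<forall>m. Phi 1 (V n (Suc m)) = V n m"
    and VK: "\<And>n. \<forall>m s. 0 \<le> s \<longrightarrow> Phi s (V n m) \<in> K"
    by metis
  have VKK: "\<And>n. \<forall>m. V n m \<in> K" using backward_chain_mem[OF V1 VK] by blast
  have "\<forall>n. V n n \<in> K" "\<forall>n s. 0 \<le> s \<longrightarrow> Phi s (V n n) \<in> K" using VKK VK by auto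
  from limit_backward_chain[OF this filterlim_real_sequentially]
  obtain r w where r: "strict_mono r" and wK: "\<forall>m. w m \<in> K" and w1: "\<forall>m. Phi 1 (w (Suc m)) = w m"
    and L: "\<forall>m s. 0 \<le> s \<longrightarrow>
      limitin X (\<lambda>i. Phi (real (r i) - real m + s) (V (r i) (r i))) (Phi s (w m)) sequentially"
    by blast
  have "\<forall>m s. 0 \<le> s \<longrightarrow>
      eventually (\<lambda>i. Phi (real (r i) - real m + s) (V (r i) (r i)) \<in> K) sequentially"
  proof (intro allI impI)
    fix m and s :: real assume "0 \<le> s"
    show "eventually (\<lambda>i. Phi (real (r i) - real m + s) (V (r i) (r i)) \<in> K) sequentially"
      using eventually_strict_mono_ge[OF r, of "real m"]
      by (rule eventually_mono) (use VK \<open>0 \<le> s\<close> in auto)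
  qed
  then have "w 0 \<in> invariant_part Phi K"
    by (rule invariant_part_if_limitin[OF w1 closedin_K L])
  moreover have "limitin X (z \<circ> r) (w 0) sequentially"
  proof -
    have "limitin X (\<lambda>i. Phi (real (r i) - real 0 + 0) (V (r i) (r i))) (Phi 0 (w 0)) sequentially"
      using L by blast
    moreover have "Phi 0 (w 0) = w 0" using flow_0 wK K_subset_topspace by blast
    moreover have "Phi (real (r i) - real 0 + 0) (V (r i) (r i)) = z (r i)" for i
      using flow_backward_chain[of "V (r i)" "r i"] VKK V1 V0 by simp
    ultimately show ?thesis by (simp add: o_def)
  qed
  ultimately show "\<exists>r y. strict_mono r \<and> y \<in> invariant_part Phi K \<and> limitin X (z \<circ> r) y sequentially"
    using r by blast
qed

end

lemma sf_nbhd_subtopology_Int: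
  assumes "openin X G" "X closure_of A \<subseteq> G" "A \<subseteq> S"
  shows "sf_nbhd (subtopology X S) A (G \<inter> S)"
proof -
  have "openin (subtopology X S) (G \<inter> S)" using assms(1) openin_subtopology by blast
  then have "(subtopology X S) interior_of (G \<inter> S) = G \<inter> S" by (rule interior_of_openin)
  moreover have "(subtopology X S) closure_of A = S \<inter> X closure_of A"
    using closure_of_subtopology[of X S A] assms(3) by (simp add: Int_absorb1)
  moreover have "G \<subseteq> topspace X" using assms(1) by (rule openin_subset)
  ultimately show ?thesis unfolding sf_nbhd_def using assms(2) by auto
qed

lemma sf_scompact_subtopology:
  assumes "M \<subseteq> S"
  shows "sf_scompact (subtopology X S) M \<longleftrightarrow> sf_scompact X M"
proof -
  have lim: "limitin (subtopology X S) (x \<circ> r) y sequentially \<longleftrightarrow> limitin X (x \<circ> r) y sequentially"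
    if "\<forall>n. x n \<in> M" "y \<in> M" for x :: "nat \<Rightarrow> 'a" and r y
    using that assms by (auto simp: limitin_subtopology subset_iff intro!: always_eventually)
  moreover have "M \<subseteq> topspace (subtopology X S) \<longleftrightarrow> M \<subseteq> topspace X" using assms by auto
  ultimately show ?thesis unfolding sf_scompact_def by (simp add: lim cong: conj_cong)
qed

lemma sf_invariant_subtopology:
  "M \<subseteq> S \<Longrightarrow> sf_invariant (subtopology X S) T Phi M \<longleftrightarrow> sf_invariant X T Phi M"
  unfolding sf_invariant_def by auto

lemma invariant_backward_chain:
  fixes Phi :: "real \<Rightarrow> 'a \<Rightarrow> 'a"
  assumes "Phi 1 ` M = M" "y \<in> M"
  obtains v where "v 0 = y" "\<forall>m. v m \<in> M" "\<forall>m. Phi 1 (v (Suc m)) = v m"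
proof -
  have "\<forall>z\<in>M. \<exists>z'. z' \<in> M \<and> Phi 1 z' = z" by (metis assms(1) imageE)
  from bchoice[OF this] obtain pre where pre: "\<forall>z\<in>M. pre z \<in> M \<and> Phi 1 (pre z) = z"
    by blast
  define v where "v = rec_nat y (\<lambda>_ z. pre z)"
  have vM: "v m \<in> M" for m
    by (induction m) (simp_all add: v_def assms(2) pre)
  moreover have "Phi 1 (v (Suc m)) = v m" for m
    using pre vM[of m] by (simp add: v_def)
  moreover have "v 0 = y" by (simp add: v_def)
  ultimately show ?thesis using that by blast
qed

locale attractor_within_attractor = admissible_region +
  fixes N0 AA A NA :: "'a set" and tau :: real
  assumes normal: "normal_space X"
    and invariant_AA: "sf_invariant X T Phi AA"
    and maximal_AA: "\<forall>M. sf_scompact X M \<and> sf_invariant X T Phi M \<and> M \<subseteq> N0 \<longrightarrow> M \<subseteq> AA"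
    and attracts_N0: "sf_attracts X T Phi AA N0"
    and N0_subset: "N0 \<subseteq> topspace X"
    and AA_subset_K: "AA \<subseteq> K" and K_subset_interior: "K \<subseteq> X interior_of N0"
    and tau_pos: "0 < tau" and absorbs_N0: "\<forall>t>tau. Phi t ` N0 \<subseteq> K"
    and A_subset: "A \<subseteq> AA" and invariant_A: "sf_invariant (subtopology X AA) T Phi A"
    and scompact_A: "sf_scompact (subtopology X AA) A"
    and nbhd_NA: "sf_nbhd (subtopology X AA) A NA"
    and attracts_NA: "sf_attracts (subtopology X AA) T Phi A NA"
    and maximal_A: "\<forall>M. sf_scompact (subtopology X AA) M \<and> sf_invariant (subtopology X AA) T Phi M
      \<and> M \<subseteq> NA \<longrightarrow> M \<subseteq> A"
begin

lemma AA_subset_topspace: "AA \<subseteq> topspace X"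
  using invariant_AA unfolding sf_invariant_def by blast

lemma K_subset_N0: "K \<subseteq> N0"
  using K_subset_interior interior_of_subset[of X N0] by blast

lemma flow_AA: "y \<in> AA \<Longrightarrow> 0 \<le> s \<Longrightarrow> Phi s y \<in> AA"
  using invariant_AA unfolding sf_invariant_def by blast

lemma complete_on_N0: "x \<in> N0 \<Longrightarrow> T x = \<infinity>"
  using attracts_N0 unfolding sf_attracts_def by blast

lemma flow_add_N0:
  assumes "x \<in> N0" "0 \<le> a" "0 \<le> b"
  shows "Phi (a + b) x = Phi a (Phi b x)"
  using flow_add[of x a b] assms complete_on_N0 N0_subset by auto

lemma flow_N0_in_topspace: "x \<in> N0 \<Longrightarrow> 0 \<le> s \<Longrightarrow> Phi s x \<in> topspace X"
  using flow_in_topspace complete_on_N0 N0_subset by blast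

lemma flow_N0_after_tau:
  assumes "x \<in> N0" "tau < s"
  shows "Phi s x \<in> K"
  using absorbs_N0 assms by blast

lemma invariant_part_K_subset_AA: "invariant_part Phi K \<subseteq> AA"
  using maximal_AA invariant_part_subset[of Phi K] K_subset_N0
    sf_scompact_invariant_part sf_invariant_invariant_part by auto

lemma A_subset_topspace: "A \<subseteq> topspace X"
  using A_subset AA_subset_topspace by blast

lemma closure_A_subset_K: "X closure_of A \<subseteq> K"
  using closure_of_minimal[OF _ closedin_K] A_subset AA_subset_K by blast

lemma flow_closure_A: "0 \<le> s \<Longrightarrow> p \<in> X closure_of A \<Longrightarrow> Phi s p \<in> X closure_of A"
  using flow_image_closure_subset[OF A_subset_topspace, of s] closure_A_subset_K complete_on_K
    invariant_A unfolding sf_invariant_def by blast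

definition "U\<^sub>A = (subtopology X AA) interior_of NA"
definition "O\<^sub>A = (SOME G. openin X G \<and> U\<^sub>A = G \<inter> AA)"
definition "R = invariant_part Phi (K - O\<^sub>A)"

lemma openin_O\<^sub>A: "openin X O\<^sub>A" and U\<^sub>A_eq: "U\<^sub>A = O\<^sub>A \<inter> AA"
proof -
  have "\<exists>G. openin X G \<and> U\<^sub>A = G \<inter> AA"
    unfolding U\<^sub>A_def using openin_interior_of openin_subtopology by blast
  then have "openin X O\<^sub>A \<and> U\<^sub>A = O\<^sub>A \<inter> AA" unfolding O\<^sub>A_def by (rule someI_ex)
  then show "openin X O\<^sub>A" "U\<^sub>A = O\<^sub>A \<inter> AA" by auto
qed

lemma closure_A_inter_AA_subset: "AA \<inter> X closure_of A \<subseteq> U\<^sub>A"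
proof -
  have "(subtopology X AA) closure_of A = AA \<inter> X closure_of A"
    using closure_of_subtopology[of X AA A] A_subset by (simp add: Int_absorb1)
  then show ?thesis using nbhd_NA unfolding sf_nbhd_def U\<^sub>A_def by simp
qed

lemma closure_R_subset: "X closure_of R \<subseteq> K - O\<^sub>A"
  using closure_of_minimal[OF invariant_part_subset[of Phi "K - O\<^sub>A"]] closedin_K openin_O\<^sub>A
  unfolding R_def by blast

lemma flow_R: "0 \<le> s \<Longrightarrow> Phi s ` R \<subseteq> R"
  unfolding R_def using flow_invariant_part[of "K - O\<^sub>A"] by blast

text \<open>A common point would have a complete orbit in both closures; it lies in \<open>AA\<close>, inside
  \<open>U\<^sub>A\<close> by the first closure but outside \<open>O\<^sub>A\<close> by the second.\<close>

lemma disjnt_closure_A_R: "disjnt (X closure_of A) (X closure_of R)"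
proof (rule ccontr)
  assume "\<not> ?thesis"
  then obtain p where pA: "p \<in> X closure_of A" and pR: "p \<in> X closure_of R"
    unfolding disjnt_def by blast
  have fA: "Phi s p \<in> X closure_of A" if "0 \<le> s" for s
    using flow_closure_A[OF that pA] .
  have fR: "Phi s p \<in> X closure_of R" if "0 \<le> s" for s
  proof -
    have "R \<subseteq> topspace X" using invariant_part_subset[of Phi "K - O\<^sub>A"] K_subset_topspace
      unfolding R_def by blast
    moreover have "\<forall>x\<in>X closure_of R. T x = \<infinity>" using closure_R_subset complete_on_K by blast
    ultimately show ?thesis
      using flow_image_closure_subset[OF _ _ flow_R that] pR by blast
  qed
  have pK: "\<forall>n. p \<in> K" and orbit_K: "\<forall>n s. 0 \<le> s \<longrightarrow> Phi s p \<in> K"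
    using pA fA closure_A_subset_K by auto
  obtain r v where r: "strict_mono r" and "\<forall>m. v m \<in> K" and v1: "\<forall>m. Phi 1 (v (Suc m)) = v m"
    and L: "\<forall>m s. 0 \<le> s \<longrightarrow> limitin X (\<lambda>i. Phi (real (r i) - real m + s) p) (Phi s (v m)) sequentially"
    by (rule limit_backward_chain[OF pK orbit_K filterlim_real_sequentially])
  have ev: "\<forall>m s. 0 \<le> s \<longrightarrow> eventually (\<lambda>i. Phi (real (r i) - real m + s) p \<in> C) sequentially"
    if "\<And>s. 0 \<le> s \<Longrightarrow> Phi s p \<in> C" for C
  proof (intro allI impI)
    fix m and s :: real assume "0 \<le> s"
    show "eventually (\<lambda>i. Phi (real (r i) - real m + s) p \<in> C) sequentially"
      using eventually_strict_mono_ge[OF r, of "real m"]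
      by (rule eventually_mono) (use that \<open>0 \<le> s\<close> in auto)
  qed
  have "v 0 \<in> invariant_part Phi K"
    by (rule invariant_part_if_limitin[OF v1 closedin_K L ev]) (use fA closure_A_subset_K in auto)
  then have "v 0 \<in> AA" using invariant_part_K_subset_AA by blast
  moreover have "v 0 \<in> invariant_part Phi (X closure_of A \<inter> X closure_of R)"
    by (rule invariant_part_if_limitin[OF v1 _ L ev]) (use fA fR in auto)
  then have "v 0 \<in> X closure_of A \<inter> X closure_of R"
    using invariant_part_subset[of Phi "X closure_of A \<inter> X closure_of R"] by blast
  ultimately have "v 0 \<in> O\<^sub>A" and "v 0 \<notin> O\<^sub>A"
    using closure_A_inter_AA_subset closure_R_subset unfolding U\<^sub>A_eq by auto
  then show False by simp
qed

definition "W = (SOME U. openin X U \<and> X closure_of A \<subseteq> U \<and> disjnt (X closure_of R) (X closure_of U))"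

lemma openin_W: "openin X W" and closure_A_subset_W: "X closure_of A \<subseteq> W"
  and disjnt_closure_W_R: "disjnt (X closure_of W) R"
proof -
  have "\<exists>U. openin X U \<and> X closure_of A \<subseteq> U \<and> disjnt (X closure_of R) (X closure_of U)"
    using normal[unfolded normal_space] disjnt_closure_A_R by simp
  then have W: "openin X W \<and> X closure_of A \<subseteq> W \<and> disjnt (X closure_of R) (X closure_of W)"
    unfolding W_def by (rule someI_ex)
  then show "openin X W" "X closure_of A \<subseteq> W" by auto
  have "R \<subseteq> X closure_of R"
    using closure_of_subset invariant_part_subset[of Phi "K - O\<^sub>A"] K_subset_topspace
    unfolding R_def by (metis Diff_subset subset_trans)
  then show "disjnt (X closure_of W) R" using W disjnt_subset2 disjnt_sym by metis
qed

text \<open>Either the chain enters \<open>U\<^sub>A\<close> early enough for the attraction of \<open>NA\<close> to carry \<open>v 0\<close> into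
  \<open>V0\<close>, or a limit of its long segments outside \<open>U\<^sub>A\<close> is a complete orbit in \<open>R\<close>, which is
  impossible in the closure of \<open>W\<close>.\<close>

lemma backward_chain_in_nbhd:
  assumes vAA: "\<forall>m. v m \<in> AA" and v1: "\<forall>m. Phi 1 (v (Suc m)) = v m"
    and vW: "\<forall>a b. 0 \<le> a \<and> a < real b \<longrightarrow> Phi a (v b) \<in> X closure_of W"
    and V0: "sf_nbhd (subtopology X AA) A V0"
  shows "v 0 \<in> V0"
proof -
  obtain t0 where t0: "t0 > 0" "\<forall>t>t0. Phi t ` NA \<subseteq> V0"
    using attracts_NA V0 unfolding sf_attracts_def by blast
  have vK: "\<forall>m. v m \<in> K" using vAA AA_subset_K by blast
  show ?thesis
  proof (cases "\<exists>a b. 0 \<le> a \<and> a + t0 + 1 \<le> real b \<and> Phi a (v b) \<in> U\<^sub>A")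
    case True
    then obtain a b where ab: "0 \<le> a" "a + t0 + 1 \<le> real b" "Phi a (v b) \<in> U\<^sub>A" by blast
    have "v 0 = Phi (real b - a + a) (v b)" using flow_backward_chain[OF vK v1] by simp
    also have "\<dots> = Phi (real b - a) (Phi a (v b))"
      using flow_add_K[of "v b" "real b - a" a] vK ab t0(1) by simp
    finally show ?thesis
      using t0(2) ab interior_of_subset[of "subtopology X AA" NA] unfolding U\<^sub>A_def by force
  next
    case False
    \<comment> \<open>sampling at \<open>2 * k\<close> keeps the times \<open>real (r i) - m + s\<close> below the index \<open>2 * r i\<close>\<close>
    have "\<forall>k. v (2 * k) \<in> K" "\<forall>k s. 0 \<le> s \<longrightarrow> Phi s (v (2 * k)) \<in> K"
      using flow_AA vAA AA_subset_K by blast+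
    from limit_backward_chain[OF this filterlim_real_sequentially]
    obtain r w where r: "strict_mono r" and "\<forall>m. w m \<in> K" and w1: "\<forall>m. Phi 1 (w (Suc m)) = w m"
      and L: "\<forall>m s. 0 \<le> s \<longrightarrow>
        limitin X (\<lambda>i. Phi (real (r i) - real m + s) (v (2 * r i))) (Phi s (w m)) sequentially" .
    define C where "C = (K - O\<^sub>A) \<inter> X closure_of W"
    have "\<forall>m s. 0 \<le> s \<longrightarrow>
        eventually (\<lambda>i. Phi (real (r i) - real m + s) (v (2 * r i)) \<in> C) sequentially"
    proof (intro allI impI)
      fix m and s :: real assume s: "0 \<le> s"
      show "eventually (\<lambda>i. Phi (real (r i) - real m + s) (v (2 * r i)) \<in> C) sequentially"
        using eventually_strict_mono_ge[OF r, of "real m + s + t0 + 1"]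
      proof (rule eventually_mono)
        fix i assume i: "real m + s + t0 + 1 \<le> real (r i)"
        define a where "a = real (r i) - real m + s"
        have a: "0 \<le> a" "a + t0 + 1 \<le> real (2 * r i)" "a < real (2 * r i)"
          using i s t0(1) unfolding a_def by auto
        have "Phi a (v (2 * r i)) \<in> AA" using flow_AA vAA a by blast
        moreover have "Phi a (v (2 * r i)) \<notin> U\<^sub>A" using False a by blast
        moreover have "Phi a (v (2 * r i)) \<in> X closure_of W" using vW a by blast
        ultimately show "Phi (real (r i) - real m + s) (v (2 * r i)) \<in> C"
          using AA_subset_K unfolding C_def a_def U\<^sub>A_eq by blast
      qed
    qed
    moreover have "closedin X C" using closedin_K openin_O\<^sub>A by (auto simp: C_def)
    ultimately have "w 0 \<in> invariant_part Phi C"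
      using invariant_part_if_limitin[OF w1 _ L] by blast
    then have "w 0 \<in> R \<and> w 0 \<in> X closure_of W"
      using invariant_part_mono[of C "K - O\<^sub>A" Phi] invariant_part_subset[of Phi C]
      unfolding R_def C_def by blast
    then show ?thesis using disjnt_closure_W_R unfolding disjnt_def by blast
  qed
qed

text \<open>The segments are started at time \<open>tau + 1\<close>, when they have entered \<open>K\<close>.\<close>

lemma exit_limit_chain:
  assumes xN0: "\<forall>n. x n \<in> N0" and e: "\<forall>n. real n + tau + 1 \<le> e n"
    and inW: "\<forall>n s. 0 \<le> s \<and> s < e n \<longrightarrow> Phi s (x n) \<in> W"
    and B: "closedin X B" and eB: "\<forall>n. Phi (e n) (x n) \<in> B"
  obtains v where "\<forall>m. v m \<in> AA" "\<forall>m. Phi 1 (v (Suc m)) = v m"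
    "\<forall>a b. 0 \<le> a \<and> a < real b \<longrightarrow> Phi a (v b) \<in> X closure_of W" "v 0 \<in> B"
proof -
  define y where "y n = Phi (tau + 1) (x n)" for n
  define t where "t n = e n - (tau + 1)" for n
  have time_nonneg: "0 \<le> t n - real m + s" if "real m \<le> real n" "0 \<le> s" for n m s
    using e[rule_format, of n] that unfolding t_def by linarith
  have shift: "Phi (t n - real m + s) (y n) = Phi (e n - real m + s) (x n)"
    if "real m \<le> real n" "0 \<le> s" for n m s
  proof -
    from time_nonneg[OF that] show ?thesis
      using flow_add_N0[of "x n" "t n - real m + s" "tau + 1"] xN0 tau_pos
      unfolding y_def t_def by (simp add: algebra_simps)
  qed
  have orbit_K: "\<forall>n s. 0 \<le> s \<longrightarrow> Phi s (y n) \<in> K"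
  proof (intro allI impI)
    fix n and s :: real assume "0 \<le> s"
    then have "Phi s (y n) = Phi (s + (tau + 1)) (x n)"
      using flow_add_N0[of "x n" s "tau + 1"] xN0 tau_pos unfolding y_def by simp
    then show "Phi s (y n) \<in> K" using flow_N0_after_tau xN0 tau_pos \<open>0 \<le> s\<close> by simp
  qed
  have yK: "\<forall>n. y n \<in> K"
    using flow_N0_after_tau xN0 unfolding y_def by simp
  have tge: "real n \<le> t n" for n using e unfolding t_def by (simp add: algebra_simps)
  have "filterlim t at_top sequentially"
    by (rule filterlim_at_top_mono[OF filterlim_real_sequentially]) (use tge in auto)
  from limit_backward_chain[OF yK orbit_K this]
  obtain r v where r: "strict_mono r" and "\<forall>m. v m \<in> K" and v1: "\<forall>m. Phi 1 (v (Suc m)) = v m"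
    and L: "\<forall>m s. 0 \<le> s \<longrightarrow>
      limitin X (\<lambda>i. Phi (t (r i) - real m + s) (y (r i))) (Phi s (v m)) sequentially" .
  have "\<forall>m s. 0 \<le> s \<longrightarrow> eventually (\<lambda>i. Phi (t (r i) - real m + s) (y (r i)) \<in> K) sequentially"
  proof (intro allI impI)
    fix m and s :: real assume s: "0 \<le> s"
    show "eventually (\<lambda>i. Phi (t (r i) - real m + s) (y (r i)) \<in> K) sequentially"
      using eventually_strict_mono_ge[OF r, of "real m"]
      by (rule eventually_mono) (use time_nonneg orbit_K s in blast)
  qed
  then have "v m \<in> invariant_part Phi K" for m
    by (rule invariant_part_if_limitin[OF v1 closedin_K L])
  then have vAA: "\<forall>m. v m \<in> AA" using invariant_part_K_subset_AA by blast
  have "Phi a (v b) \<in> X closure_of W" if ab: "0 \<le> a" "a < real b" for a b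
  proof (rule limitin_closedin[OF L[rule_format, OF ab(1), of b]])
    show "eventually (\<lambda>i. Phi (t (r i) - real b + a) (y (r i)) \<in> X closure_of W) sequentially"
      using eventually_strict_mono_ge[OF r, of "real b"]
    proof (rule eventually_mono)
      fix i assume i: "real b \<le> real (r i)"
      have "Phi (e (r i) - real b + a) (x (r i)) \<in> W"
        using inW e[rule_format, of "r i"] i ab tau_pos by simp
      then show "Phi (t (r i) - real b + a) (y (r i)) \<in> X closure_of W"
        using shift[OF i ab(1)] closure_of_subset[OF openin_subset[OF openin_W]] by auto
    qed
  qed simp_all
  moreover have "v 0 \<in> B"
  proof -
    have "Phi 0 (v 0) \<in> B"
      by (rule limitin_closedin[OF L[rule_format, of 0 0] B])
        (use shift[of 0 _ 0] eB in \<open>auto intro!: always_eventually\<close>)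
    moreover have "v 0 \<in> topspace X" using \<open>\<forall>m. v m \<in> K\<close> K_subset_topspace by blast
    ultimately show ?thesis using flow_0[of "v 0"] by simp
  qed
  ultimately show ?thesis using that vAA v1 by blast
qed

text \<open>Otherwise there are orbits from \<open>N0\<close> staying in \<open>W\<close> for longer and longer times and then
  leaving it; their exit limit is a chain ending outside \<open>W\<close>, contradicting the previous lemma.\<close>

lemma exit_bound_exists:
  "\<exists>S::nat. \<forall>x\<in>N0. (\<forall>s\<in>{0..real S}. Phi s x \<in> W) \<longrightarrow> (\<forall>s\<ge>0. Phi s x \<in> W)"
proof (rule ccontr)
  assume "\<not> ?thesis"
  then have "\<forall>n. \<exists>y. y \<in> N0 \<and> (\<forall>s\<in>{0..real (n + nat \<lceil>tau\<rceil> + 2)}. Phi s y \<in> W) \<and>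
      (\<exists>s\<ge>0. Phi s y \<notin> W)"
    by blast
  then obtain x where xN0: "\<forall>n. x n \<in> N0"
    and xW: "\<forall>n. \<forall>s\<in>{0..real (n + nat \<lceil>tau\<rceil> + 2)}. Phi s (x n) \<in> W"
    and xout: "\<forall>n. \<exists>s\<ge>0. Phi s (x n) \<notin> W"
    by metis
  have "\<exists>e. 0 \<le> e \<and> Phi e (x n) \<notin> W \<and> (\<forall>s. 0 \<le> s \<and> s < e \<longrightarrow> Phi s (x n) \<in> W)" for n
  proof -
    obtain s where "0 \<le> s" "Phi s (x n) \<notin> W" using xout by blast
    moreover have "x n \<in> topspace X" "T (x n) = \<infinity>"
      using xN0 N0_subset complete_on_N0 by auto
    ultimately show ?thesis using first_exit_time[OF _ _ openin_W] by metis
  qed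
  then obtain e where e0: "\<forall>n. 0 \<le> e n" and eout: "\<forall>n. Phi (e n) (x n) \<notin> W"
    and inW: "\<forall>n s. 0 \<le> s \<and> s < e n \<longrightarrow> Phi s (x n) \<in> W"
    by metis
  have "real n + tau + 1 \<le> e n" for n
  proof (rule ccontr)
    assume "\<not> ?thesis"
    moreover have "tau \<le> real (nat \<lceil>tau\<rceil>)" by linarith
    ultimately have "e n \<in> {0..real (n + nat \<lceil>tau\<rceil> + 2)}" using e0 by simp
    then show False using xW eout by blast
  qed
  moreover have "\<forall>n. Phi (e n) (x n) \<in> topspace X - W"
    using flow_N0_in_topspace xN0 e0 eout by blast
  ultimately obtain v where "\<forall>m. v m \<in> AA" "\<forall>m. Phi 1 (v (Suc m)) = v m"
    "\<forall>a b. 0 \<le> a \<and> a < real b \<longrightarrow> Phi a (v b) \<in> X closure_of W" "v 0 \<in> topspace X - W"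
    using exit_limit_chain[OF xN0 _ inW _] openin_W by blast
  moreover have "sf_nbhd (subtopology X AA) A (W \<inter> AA)"
    by (rule sf_nbhd_subtopology_Int[OF openin_W closure_A_subset_W A_subset])
  ultimately show False using backward_chain_in_nbhd by blast
qed

definition "exit_bound = (SOME S::nat. \<forall>x\<in>N0. (\<forall>s\<in>{0..real S}. Phi s x \<in> W) \<longrightarrow> (\<forall>s\<ge>0. Phi s x \<in> W))"

definition "basin = {x \<in> X interior_of N0. \<forall>s\<in>{0..real exit_bound}. Phi s x \<in> W}"

lemma basin_subset_N0: "basin \<subseteq> N0"
  unfolding basin_def using interior_of_subset[of X N0] by blast

lemma flow_basin: "x \<in> basin \<Longrightarrow> 0 \<le> s \<Longrightarrow> Phi s x \<in> W"
  using someI_ex[OF exit_bound_exists] basin_subset_N0 unfolding basin_def exit_bound_def by blast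

lemma basin_subset_W: "basin \<subseteq> W"
  using flow_basin[of _ 0] flow_0 basin_subset_N0 N0_subset by force

lemma sf_nbhd_basin: "sf_nbhd X A basin"
proof -
  have "openin X basin"
    unfolding basin_def
    by (rule openin_stays_until[OF openin_interior_of _ openin_W])
      (use interior_of_subset[of X N0] complete_on_N0 in auto)
  moreover have "X closure_of A \<subseteq> basin"
    unfolding basin_def
    using closure_A_subset_K K_subset_interior flow_closure_A closure_A_subset_W by auto
  ultimately show ?thesis
    unfolding sf_nbhd_def using basin_subset_N0 N0_subset by (simp add: interior_of_openin)
qed

text \<open>Points of \<open>basin\<close> never leave \<open>W\<close>; an orbit running into the complement of a neighbourhood
  of \<open>A\<close> at arbitrarily late times would give an exit limit chain ending outside it.\<close>

lemma sf_attracts_basin: "sf_attracts X T Phi A basin"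
  unfolding sf_attracts_def
proof (intro conjI ballI allI impI)
  show "T x = \<infinity>" if "x \<in> basin" for x using that basin_subset_N0 complete_on_N0 by blast
  fix U assume U: "sf_nbhd X A U"
  define G where "G = X interior_of U"
  have G: "openin X G" "X closure_of A \<subseteq> G" "G \<subseteq> U"
    using U interior_of_subset[of X U] unfolding G_def sf_nbhd_def by auto
  show "\<exists>t0>0. \<forall>t>t0. Phi t ` basin \<subseteq> U"
  proof (rule ccontr)
    assume neg: "\<not> ?thesis"
    have "\<exists>t x. t > real n + tau + 1 \<and> x \<in> basin \<and> Phi t x \<notin> U" for n :: nat
    proof -
      have "0 < real n + tau + 1" using tau_pos by simp
      then have "\<not> (\<forall>t > real n + tau + 1. Phi t ` basin \<subseteq> U)" using neg by blast
      then show ?thesis by blast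
    qed
    then obtain e x where e: "\<forall>n. real n + tau + 1 \<le> e n" and x: "\<forall>n. x n \<in> basin"
      and out: "\<forall>n. Phi (e n) (x n) \<notin> U"
      by (metis less_imp_le)
    have xN0: "\<forall>n. x n \<in> N0" using x basin_subset_N0 by blast
    have "0 \<le> e n" for n using e[rule_format, of n] tau_pos by linarith
    then have "\<forall>n. Phi (e n) (x n) \<in> topspace X - G"
      using flow_N0_in_topspace xN0 out G(3) by blast
    then obtain v where "\<forall>m. v m \<in> AA" "\<forall>m. Phi 1 (v (Suc m)) = v m"
      "\<forall>a b. 0 \<le> a \<and> a < real b \<longrightarrow> Phi a (v b) \<in> X closure_of W" "v 0 \<in> topspace X - G"
      using exit_limit_chain[OF xN0 e _ _] flow_basin x G(1) by blast
    moreover have "sf_nbhd (subtopology X AA) A (G \<inter> AA)"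
      by (rule sf_nbhd_subtopology_Int[OF G(1,2) A_subset])
    ultimately show False using backward_chain_in_nbhd by blast
  qed
qed

lemma maximal_in_basin:
  assumes "sf_scompact X M" "sf_invariant X T Phi M" "M \<subseteq> basin"
  shows "M \<subseteq> A"
proof -
  have "M \<subseteq> AA" using maximal_AA assms basin_subset_N0 by blast
  have flow_M: "Phi s ` M = M" if "0 \<le> s" for s using assms(2) that unfolding sf_invariant_def by blast
  have "M \<subseteq> NA"
  proof
    fix y assume "y \<in> M"
    with flow_M[of 1] obtain v where "v 0 = y" "\<forall>m. v m \<in> M" "\<forall>m. Phi 1 (v (Suc m)) = v m"
      by (rule invariant_backward_chain) simp
    moreover have "\<forall>a b. 0 \<le> a \<and> a < real b \<longrightarrow> Phi a (v b) \<in> X closure_of W"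
      using flow_M \<open>\<forall>m. v m \<in> M\<close> assms(3) basin_subset_W
        closure_of_subset[OF openin_subset[OF openin_W]] by blast
    ultimately show "y \<in> NA"
      using backward_chain_in_nbhd[OF _ _ _ nbhd_NA] \<open>M \<subseteq> AA\<close> by blast
  qed
  then show ?thesis
    using maximal_A assms(1,2) \<open>M \<subseteq> AA\<close> sf_scompact_subtopology sf_invariant_subtopology
    by blast
qed

lemma sf_attractor_A:
  assumes "A \<noteq> {}"
  shows "sf_attractor X T Phi A"
proof -
  have "sf_scompact X A" using scompact_A sf_scompact_subtopology[OF A_subset] by simp
  moreover have "sf_invariant X T Phi A"
    using invariant_A sf_invariant_subtopology[OF A_subset] by simp
  ultimately show ?thesis
    unfolding sf_attractor_def using assms sf_nbhd_basin sf_attracts_basin maximal_in_basin by blast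
qed

end

lemma attractor_within_attractor_instance:
  assumes Hausdorff: "Hausdorff_space X" and normal: "normal_space X"
    and flow: "local_semiflow X T Phi" and AA: "sf_attractor X T Phi AA"
    and N1: "sf_nbhd X AA N1" "sf_admissible X T Phi N1"
    and A: "sf_attractor (subtopology X AA) T Phi A"
  obtains K N0 NA tau where "attractor_within_attractor X T Phi K N1 N0 AA A NA tau"
proof -
  obtain N0 where N0: "sf_nbhd X AA N0" "sf_attracts X T Phi AA N0"
    "\<forall>M. sf_scompact X M \<and> sf_invariant X T Phi M \<and> M \<subseteq> N0 \<longrightarrow> M \<subseteq> AA"
    using AA unfolding sf_attractor_def by blast
  obtain NA where NA: "sf_nbhd (subtopology X AA) A NA" "sf_attracts (subtopology X AA) T Phi A NA"
    "\<forall>M. sf_scompact (subtopology X AA) M \<and> sf_invariant (subtopology X AA) T Phi M \<and> M \<subseteq> NA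
      \<longrightarrow> M \<subseteq> A"
    using A unfolding sf_attractor_def by blast
  have AA_inv: "sf_invariant X T Phi AA" using AA unfolding sf_attractor_def by blast
  have "X closure_of AA \<subseteq> X interior_of N0 \<inter> X interior_of N1"
    using N0(1) N1(1) unfolding sf_nbhd_def by blast
  then obtain V where V: "openin X V" "X closure_of AA \<subseteq> V"
    "X closure_of V \<subseteq> X interior_of N0 \<inter> X interior_of N1"
    using normal[unfolded normal_space_alt]
    by (meson closedin_closure_of openin_Int openin_interior_of)
  have "sf_nbhd X AA V" unfolding sf_nbhd_def using V by (simp add: interior_of_openin openin_subset)
  then obtain tau where tau: "0 < tau" "\<forall>t>tau. Phi t ` N0 \<subseteq> V"
    using N0(2) unfolding sf_attracts_def by blast
  have V_closure: "V \<subseteq> X closure_of V" using V(1) by (simp add: closure_of_subset openin_subset)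
  have AA_V: "AA \<subseteq> V"
    using V(2) closure_of_subset[of AA X] AA_inv unfolding sf_invariant_def by blast
  show ?thesis
  proof (rule that, unfold_locales)
    show "\<forall>x\<in>X closure_of V. T x = \<infinity>"
      using V(3) interior_of_subset[of X N0] N0(2) unfolding sf_attracts_def by blast
    show "X closure_of V \<subseteq> N1" using V(3) interior_of_subset[of X N1] by blast
    show "AA \<subseteq> X closure_of V" using AA_V V_closure by blast
    show "\<forall>t>tau. Phi t ` N0 \<subseteq> X closure_of V" using tau(2) V_closure by blast
    show "A \<subseteq> AA" using A unfolding sf_attractor_def sf_invariant_def by auto
    show "N0 \<subseteq> topspace X" using N0(1) unfolding sf_nbhd_def by blast
  qed (use Hausdorff flow N1(2) normal AA_inv N0 NA V(3) tau(1) A in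
    \<open>auto simp: sf_attractor_def\<close>)
qed

theorem theorem6p1:
  fixes X :: "'a topology" and T :: "'a \<Rightarrow> ereal" and Phi :: "real \<Rightarrow> 'a \<Rightarrow> 'a"
    and AA N1 A :: "'a set"
  assumes "Hausdorff_space X" and "normal_space X"
    and "local_semiflow X T Phi"
    and "sf_attractor X T Phi AA"
    and "sf_nbhd X AA N1" and "sf_admissible X T Phi N1"
    and "sf_attractor (subtopology X AA) T Phi A"
  shows "sf_attractor X T Phi A"
proof -
  obtain K N0 NA tau where "attractor_within_attractor X T Phi K N1 N0 AA A NA tau"
    using attractor_within_attractor_instance[OF assms] .
  moreover have "A \<noteq> {}" using assms(7) unfolding sf_attractor_def by blast
  ultimately show ?thesis by (rule attractor_within_attractor.sf_attractor_A)
qed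

end
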